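(* Let $O,M^\star,\hat E\in\mathbb R^{n\times T}$, $Z_1,\dots,Z_k\in\mathbb R^{n\times T}$ and $\tau^\star\in\mathbb R^k$ satisfy $O=M^\star+\sum_{i=1}^k\tau^\star_iZ_i+\hat E$, and let $\lambda>0$. Suppose $(\hat M,\hat m,\hat\tau)$ is a minimizer of $$\min_{M\in\mathbb R^{n\times T},\tau\in\mathbb R^k,m\in\mathbb R^n}\ \frac12\Big\|O-M-m\mathbf 1^\top-\sum_{i=1}^k\tau_iZ_i\Big\|_F^2+\lambda\|M\|_\star .$$ Let $\hat M=\hat U\hat\Sigma\hat V^\top$ be the SVD of $\hat M$ and let $\hat{\mathbf T}=\{\hat UA^\top+B\hat V^\top+v\mathbf 1^\top: A,B,v\}$ be the span of the tangent space of $\hat M$ and $\{v\mathbf 1^\top:v\in\mathbb R^n\}$. Then $$D(\hat\tau-\tau^\star)=\Delta^1+\Delta^2+\Delta^3,$$ where $D\in\mathbb R^{k\times k}$ has entries $D_{ij}=\langle P_{\hat{\mathbf T}^\perp}(Z_i),P_{\hat{\mathbf T}^\perp}(Z_j)\rangle$ and $\Delta^1,\Delta^2,\Delta^3\in\mathbb R^k$ have components $\Delta^1_i=\lambda\langle Z_i,\hat U\hat V^\top\rangle$, $\Delta^2_i=\langle Z_i,P_{\hat{\mathbf T}^\perp}(\hat E)\rangle$, $\Delta^3_i=\langle Z_i,P_{\hat{\mathbf T}^\perp}(M^\star)\rangle$.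
   Context: $\|\cdot\|_F$ is the Frobenius norm, $\|\cdot\|_\star$ the nuclear norm, $\langle\cdot,\cdot\rangle$ the Frobenius inner product, $\mathbf 1$ the all-ones vector in $\mathbb R^T$, and $P_{\hat{\mathbf T}^\perp}$ the orthogonal projection onto the orthogonal complement of $\hat{\mathbf T}$. The SVD is the compact SVD ($\hat U,\hat V$ with orthonormal columns, $\hat\Sigma$ diagonal positive). *)

theory Defs
  imports "HOL-Analysis.Analysis"
begin

text \<open>Matrices in R^(n x T) are modelled as real^'t^'n (row index 'n, column index 't).
  On this type the library inner product and norm are exactly the Frobenius
  inner product and the Frobenius norm.\<close>

definition outer :: "real^'n \<Rightarrow> real^'t \<Rightarrow> real^'t^'n" where
  "outer u v = (\<chi> i j. u $ i * v $ j)"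

definition ones :: "real^'t" where
  "ones = (\<chi> j. 1)"

definition compact_svd ::
  "real^'t^'n \<Rightarrow> nat \<Rightarrow> (nat \<Rightarrow> real^'n) \<Rightarrow> (nat \<Rightarrow> real) \<Rightarrow> (nat \<Rightarrow> real^'t) \<Rightarrow> bool" where
  "compact_svd M r u s v \<longleftrightarrow>
     (\<forall>l<r. \<forall>l'<r. u l \<bullet> u l' = (if l = l' then 1 else 0)) \<and>
     (\<forall>l<r. \<forall>l'<r. v l \<bullet> v l' = (if l = l' then 1 else 0)) \<and>
     (\<forall>l<r. s l > 0) \<and>
     M = (\<Sum>l<r. s l *\<^sub>R outer (u l) (v l))"

definition nuclear_norm :: "real^'t^'n \<Rightarrow> real" where
  "nuclear_norm M = (THE x. \<exists>r u s v. compact_svd M r u s v \<and> x = (\<Sum>l<r. s l))"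

definition orth_compl :: "'a::real_inner set \<Rightarrow> 'a set" where
  "orth_compl S = {y. \<forall>x\<in>S. y \<bullet> x = 0}"

definition orth_proj :: "'a::real_inner set \<Rightarrow> 'a \<Rightarrow> 'a" where
  "orth_proj S x = (THE p. p \<in> S \<and> (\<forall>y\<in>S. (x - p) \<bullet> y = 0))"

text \<open>Span of the tangent space of M = U Sigma V^T and of the matrices v 1^T:
  { U A^T + B V^T + v 1^T }.\<close>
definition tangent_T ::
  "nat \<Rightarrow> (nat \<Rightarrow> real^'n) \<Rightarrow> (nat \<Rightarrow> real^'t) \<Rightarrow> (real^'t^'n) set" where
  "tangent_T r u v = {(\<Sum>l<r. outer (u l) (a l)) + (\<Sum>l<r. outer (b l) (v l)) + outer w ones
                      | a b w. True}"

definition objective ::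
  "real^'t^'n \<Rightarrow> ('k \<Rightarrow> real^'t^'n) \<Rightarrow> real \<Rightarrow> real^'t^'n \<Rightarrow> real^'n \<Rightarrow> real^'k::finite \<Rightarrow> real" where
  "objective Obs Z lam M m \<tau> =
     (1/2) * (norm (Obs - M - outer m ones - (\<Sum>i\<in>UNIV. \<tau> $ i *\<^sub>R Z i)))\<^sup>2 + lam * nuclear_norm M"

end

theory Submission
  imports Defs
begin

(* Write R = O - M - m 1^T - sum_i tau_i Z_i for the residual at the minimizer. Moving along a
   direction in which the nuclear norm grows at most like c t + O(t^2) forces <R, direction> to
   equal lambda c. Perturbing tau and m gives <R, Z_i> = 0 and <R, v 1^T> = 0; perturbing a
   singular pair, u_l a^T or b v_l^T, gives lambda <v_l, a> and lambda <u_l, b>. Hence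
   R - lambda U V^T is orthogonal to T, so the projection of R onto T^perp is R - lambda U V^T.
   Projecting sum_i (tau_i - tau*_i) Z_i = M* + E - (M + m 1^T) - R onto T^perp, where
   M + m 1^T lies in T, and pairing with Z_i gives the identity.
   The nuclear norm is defined through an arbitrary compact SVD, so one first shows that every
   matrix has one (deflating a maximizer of |M x| on the unit sphere) and that its sum of
   singular values is the least value of sum_k |x_k| |y_k| over all decompositions
   M = sum_k x_k y_k^T. *)

section \<open>Outer products and orthonormal families\<close>

lemma inner_outer: "outer a b \<bullet> outer c d = (a \<bullet> c) * (b \<bullet> d)"
  by (simp add: outer_def inner_vec_def sum_distrib_left sum_distrib_right mult_ac)

lemma outer_add_left: "outer (a + b) c = outer a c + outer b c"
  and outer_add_right: "outer c (a + b) = outer c a + outer c b"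
  and outer_scaleR_left: "outer (k *\<^sub>R a) c = k *\<^sub>R outer a c"
  and outer_scaleR_right: "outer c (k *\<^sub>R a) = k *\<^sub>R outer c a"
  and outer_zero_left [simp]: "outer 0 c = 0"
  and outer_zero_right [simp]: "outer c 0 = 0"
  by (simp_all add: outer_def vec_eq_iff algebra_simps)

lemma outer_mult_vec: "outer a b *v x = (b \<bullet> x) *\<^sub>R a"
  by (simp add: outer_def matrix_vector_mult_def vec_eq_iff inner_vec_def sum_distrib_left mult_ac)

lemma transpose_outer: "transpose (outer a b) = outer b a"
  by (simp add: outer_def transpose_def vec_eq_iff)

lemma transpose_add: "transpose (A + B) = transpose A + transpose B"
  by (simp add: transpose_def vec_eq_iff)

lemma transpose_sum: "transpose (\<Sum>l\<in>L. f l) = (\<Sum>l\<in>L. transpose (f l))"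
  by (induct L rule: infinite_finite_induct) (simp_all add: transpose_def vec_eq_iff)

lemma sum_matrix_vector_mult: "(\<Sum>l\<in>L. f l) *v (x :: real^'n) = (\<Sum>l\<in>L. f l *v x)"
  by (induct L rule: infinite_finite_induct) (simp_all add: matrix_vector_mult_add_rdistrib)

lemma scaleR_matrix_vector_mult: "(c *\<^sub>R A) *v (x :: real^'n) = c *\<^sub>R (A *v x)"
  by (simp add: matrix_vector_mult_def vec_eq_iff sum_distrib_left mult_ac)

lemma nonneg_quadratic_imp_linear_coeff_zero:
  fixes a K :: real
  assumes "\<And>t. 0 \<le> t * a + t\<^sup>2 * K"
  shows "a = 0"
proof (rule ccontr)
  assume "a \<noteq> 0"
  define c where "c = \<bar>K\<bar> + 1"
  have "c > 0" and K: "\<bar>K\<bar> = c - 1" by (simp_all add: c_def)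
  have "(- a / c) * a + (- a / c)\<^sup>2 * K \<le> - a\<^sup>2 / c + a\<^sup>2 * \<bar>K\<bar> / c\<^sup>2"
    by (simp add: power2_eq_square power_divide divide_right_mono mult_left_mono)
  also have "\<dots> = - a\<^sup>2 / c\<^sup>2"
    using \<open>c > 0\<close> unfolding K by (simp add: field_simps power2_eq_square)
  also have "\<dots> < 0"
    using \<open>a \<noteq> 0\<close> \<open>c > 0\<close> by simp
  finally show False
    using assms[of "- a / c"] by linarith
qed

lemma norm_add_scaleR_power2:
  fixes a b :: "'a::real_inner"
  shows "(norm (a + t *\<^sub>R b))\<^sup>2 = (norm a)\<^sup>2 + 2 * t * (a \<bullet> b) + t\<^sup>2 * (norm b)\<^sup>2"
  unfolding power2_norm_eq_inner
  by (simp add: inner_add_left inner_add_right inner_commute algebra_simps power2_eq_square)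

definition orthonormal_upto :: "nat \<Rightarrow> (nat \<Rightarrow> 'a::real_inner) \<Rightarrow> bool" where
  "orthonormal_upto r u \<longleftrightarrow> (\<forall>l<r. \<forall>l'<r. u l \<bullet> u l' = (if l = l' then 1 else 0))"

lemma orthonormal_upto_norm:
  assumes "orthonormal_upto r u" "l < r"
  shows "norm (u l) = 1"
  using assms by (simp add: orthonormal_upto_def norm_eq_sqrt_inner)

lemma orthonormal_upto_sum_inner:
  assumes "orthonormal_upto r u" "l < r"
  shows "(\<Sum>l'<r. (u l' \<bullet> u l) * f l') = f l"
proof -
  have "(\<Sum>l'<r. (u l' \<bullet> u l) * f l') = (\<Sum>l'<r. if l' = l then f l' else 0)"
    using assms by (intro sum.cong) (auto simp: orthonormal_upto_def)
  then show ?thesis using assms by simp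
qed

lemma orthonormal_upto_norm_sum_power2:
  assumes "orthonormal_upto r u"
  shows "(norm (\<Sum>l<r. c l *\<^sub>R u l))\<^sup>2 = (\<Sum>l<r. (c l)\<^sup>2)"
proof -
  have "(norm (\<Sum>l<r. c l *\<^sub>R u l))\<^sup>2 = (\<Sum>l<r. c l * (\<Sum>l'<r. (u l' \<bullet> u l) * c l'))"
    by (simp add: power2_norm_eq_inner inner_sum_left inner_sum_right sum_distrib_left mult_ac)
  also have "\<dots> = (\<Sum>l<r. (c l)\<^sup>2)"
    using orthonormal_upto_sum_inner[OF assms] by (intro sum.cong) (auto simp: power2_eq_square)
  finally show ?thesis .
qed

lemma bessel_inequality:
  assumes "orthonormal_upto r u"
  shows "(\<Sum>l<r. (y \<bullet> u l)\<^sup>2) \<le> (norm y)\<^sup>2"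
proof -
  define z where "z = (\<Sum>l<r. (y \<bullet> u l) *\<^sub>R u l)"
  have "y \<bullet> z = (\<Sum>l<r. (y \<bullet> u l)\<^sup>2)"
    by (simp add: z_def inner_sum_right power2_eq_square)
  moreover have "z \<bullet> z = (\<Sum>l<r. (y \<bullet> u l)\<^sup>2)"
    using orthonormal_upto_norm_sum_power2[OF assms] by (simp add: z_def power2_norm_eq_inner)
  moreover have "0 \<le> (y - z) \<bullet> (y - z)" by simp
  ultimately show ?thesis
    by (simp add: power2_norm_eq_inner inner_diff_left inner_diff_right inner_commute)
qed

lemma sum_inner_orthonormal_le:
  assumes "orthonormal_upto r u" "orthonormal_upto r v"
  shows "(\<Sum>l<r. (x \<bullet> u l) * (y \<bullet> v l)) \<le> norm x * norm y"
proof -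
  define z where "z = (\<Sum>l<r. (y \<bullet> v l) *\<^sub>R u l)"
  have "(norm z)\<^sup>2 \<le> (norm y)\<^sup>2"
    using orthonormal_upto_norm_sum_power2[OF assms(1)] bessel_inequality[OF assms(2)]
    by (simp add: z_def)
  then have "norm z \<le> norm y" by (rule power2_le_imp_le) simp
  have "(\<Sum>l<r. (x \<bullet> u l) * (y \<bullet> v l)) = x \<bullet> z"
    by (simp add: z_def inner_sum_right mult_ac)
  also have "\<dots> \<le> norm x * norm z" by (rule norm_cauchy_schwarz)
  also have "\<dots> \<le> norm x * norm y" using \<open>norm z \<le> norm y\<close> by (simp add: mult_left_mono)
  finally show ?thesis .
qed

lemma inner_sum_outer_outer_left:
  assumes "orthonormal_upto r u" "l < r"
  shows "(\<Sum>l'<r. outer (u l') (v l')) \<bullet> outer (u l) a = v l \<bullet> a"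
  by (simp add: inner_sum_left inner_outer orthonormal_upto_sum_inner[OF assms])

lemma inner_sum_outer_outer_right:
  assumes "orthonormal_upto r v" "l < r"
  shows "(\<Sum>l'<r. outer (u l') (v l')) \<bullet> outer b (v l) = u l \<bullet> b"
  using orthonormal_upto_sum_inner[OF assms, of "\<lambda>l'. u l' \<bullet> b"]
  by (simp add: inner_sum_left inner_outer mult.commute)

section \<open>The nuclear norm\<close>

lemma compact_svd_iff:
  "compact_svd M r u s v \<longleftrightarrow> orthonormal_upto r u \<and> orthonormal_upto r v \<and> (\<forall>l<r. s l > 0)
     \<and> M = (\<Sum>l<r. s l *\<^sub>R outer (u l) (v l))"
  by (simp add: compact_svd_def orthonormal_upto_def)

lemma compact_svdD:
  assumes "compact_svd M r u s v"
  shows "orthonormal_upto r u" "orthonormal_upto r v" "\<And>l. l < r \<Longrightarrow> s l > 0"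
    "M = (\<Sum>l<r. s l *\<^sub>R outer (u l) (v l))"
  using assms by (auto simp: compact_svd_iff)

lemma inner_compact_svd_sum_outer:
  assumes svd: "compact_svd M r u s v"
  shows "M \<bullet> (\<Sum>l<r. outer (u l) (v l)) = (\<Sum>l<r. s l)"
proof -
  note svd' = compact_svdD[OF svd]
  have "M \<bullet> (\<Sum>l<r. outer (u l) (v l)) = (\<Sum>l<r. \<Sum>l'<r. (u l' \<bullet> u l) * (s l' * (v l' \<bullet> v l)))"
    by (simp add: svd'(4) inner_sum_left inner_sum_right inner_outer mult_ac)
  also have "\<dots> = (\<Sum>l<r. s l * (v l \<bullet> v l))"
    using orthonormal_upto_sum_inner[OF svd'(1)] by simp
  also have "\<dots> = (\<Sum>l<r. s l)"
    using orthonormal_upto_norm[OF svd'(2)] by (simp add: norm_eq_sqrt_inner)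
  finally show ?thesis .
qed

lemma sum_singular_values_le:
  assumes svd: "compact_svd M r u s v" and M: "M = (\<Sum>k<p. outer (x k) (y k))"
  shows "(\<Sum>l<r. s l) \<le> (\<Sum>k<p. norm (x k) * norm (y k))"
proof -
  note svd' = compact_svdD[OF svd]
  have "(\<Sum>l<r. s l) = M \<bullet> (\<Sum>l<r. outer (u l) (v l))"
    by (rule inner_compact_svd_sum_outer[OF svd, symmetric])
  also have "\<dots> = (\<Sum>k<p. \<Sum>l<r. (x k \<bullet> u l) * (y k \<bullet> v l))"
    by (simp add: M inner_sum_left inner_sum_right inner_outer) (rule sum.swap)
  also have "\<dots> \<le> (\<Sum>k<p. norm (x k) * norm (y k))"
    by (intro sum_mono sum_inner_orthonormal_le svd')
  finally show ?thesis .
qed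

lemma compact_svd_sum_outer_scaled:
  assumes svd: "compact_svd M r u s v"
  shows "M = (\<Sum>l<r. outer (s l *\<^sub>R u l) (v l))"
    and "(\<Sum>l<r. norm (s l *\<^sub>R u l) * norm (v l)) = (\<Sum>l<r. s l)"
  using compact_svdD[OF svd] orthonormal_upto_norm[OF compact_svdD(1)[OF svd]]
    orthonormal_upto_norm[OF compact_svdD(2)[OF svd]]
  by (simp_all add: outer_scaleR_left less_imp_le)

lemma compact_svd_sum_singular_values_unique:
  assumes "compact_svd M r u s v" "compact_svd M r' u' s' v'"
  shows "(\<Sum>l<r. s l) = (\<Sum>l<r'. s' l)"
  using sum_singular_values_le[OF assms(1) compact_svd_sum_outer_scaled(1)[OF assms(2)]]
    sum_singular_values_le[OF assms(2) compact_svd_sum_outer_scaled(1)[OF assms(1)]]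
  unfolding compact_svd_sum_outer_scaled(2)[OF assms(1)] compact_svd_sum_outer_scaled(2)[OF assms(2)]
  by linarith

lemma nuclear_norm_eq_sum:
  assumes "compact_svd M r u s v"
  shows "nuclear_norm M = (\<Sum>l<r. s l)"
  unfolding nuclear_norm_def
  using assms compact_svd_sum_singular_values_unique by (intro the_equality) blast+

lemma compact_svd_mult_vec:
  assumes svd: "compact_svd M r u s v" and l: "l < r"
  shows "M *v v l = s l *\<^sub>R u l"
    and "u l \<bullet> (M *v x) = s l * (v l \<bullet> x)"
proof -
  note svd' = compact_svdD[OF svd]
  have "M *v v l = (\<Sum>l'<r. (s l' * (v l' \<bullet> v l)) *\<^sub>R u l')"
    by (simp add: svd'(4) sum_matrix_vector_mult outer_mult_vec scaleR_matrix_vector_mult)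
  also have "\<dots> = (\<Sum>l'<r. if l' = l then s l *\<^sub>R u l else 0)"
    using svd'(2) l by (intro sum.cong) (auto simp: orthonormal_upto_def)
  finally show "M *v v l = s l *\<^sub>R u l"
    using l by simp
  have "u l \<bullet> (M *v x) = (\<Sum>l'<r. (u l' \<bullet> u l) * (s l' * (v l' \<bullet> x)))"
    by (simp add: svd'(4) sum_matrix_vector_mult outer_mult_vec scaleR_matrix_vector_mult
        inner_sum_right inner_commute mult_ac)
  also have "\<dots> = s l * (v l \<bullet> x)"
    by (rule orthonormal_upto_sum_inner[OF svd'(1) l])
  finally show "u l \<bullet> (M *v x) = s l * (v l \<bullet> x)" .
qed

lemma orthonormal_upto_extend:
  assumes "orthonormal_upto r u" "norm x = 1" "\<And>l. l < r \<Longrightarrow> x \<bullet> u l = 0"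
  shows "orthonormal_upto (Suc r) (u(r := x))"
proof -
  have "x \<bullet> x = 1" "\<And>l. l < r \<Longrightarrow> u l \<bullet> x = 0"
    using assms by (simp_all add: power2_norm_eq_inner[symmetric] inner_commute)
  with assms(1,3) show ?thesis
    unfolding orthonormal_upto_def by (simp add: less_Suc_eq)
qed

lemma compact_svd_extend:
  assumes svd: "compact_svd M r u s v" and "norm x = 1" "norm y = 1" "\<sigma> > 0"
    and "\<And>l. l < r \<Longrightarrow> x \<bullet> u l = 0" "\<And>l. l < r \<Longrightarrow> y \<bullet> v l = 0"
  shows "compact_svd (M + \<sigma> *\<^sub>R outer x y) (Suc r) (u(r := x)) (s(r := \<sigma>)) (v(r := y))"
proof -
  note svd' = compact_svdD[OF svd]
  have "(\<Sum>l<r. (s(r := \<sigma>)) l *\<^sub>R outer ((u(r := x)) l) ((v(r := y)) l))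
        = (\<Sum>l<r. s l *\<^sub>R outer (u l) (v l))"
    by (rule sum.cong) auto
  then show ?thesis
    using assms svd' orthonormal_upto_extend[OF svd'(1) assms(2,5)]
      orthonormal_upto_extend[OF svd'(2) assms(3,6)]
    by (simp add: compact_svd_iff)
qed

lemma exists_unit_vector_maximizing_norm_mult:
  fixes M :: "real^'t::finite^'n::finite"
  obtains v where "norm v = 1" "\<And>x. norm (M *v x) \<le> norm (M *v v) * norm x"
proof -
  have "continuous_on (sphere 0 1) (\<lambda>x::real^'t. norm (M *v x))"
    by (intro continuous_intros)
  moreover have "sphere (0::real^'t) 1 \<noteq> {}"
    by simp
  ultimately obtain v where v: "v \<in> sphere (0::real^'t) 1"
    and max: "\<And>y. y \<in> sphere 0 1 \<Longrightarrow> norm (M *v y) \<le> norm (M *v v)"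
    using continuous_attains_sup[OF compact_sphere] by blast
  have "norm (M *v x) \<le> norm (M *v v) * norm x" for x
  proof (cases "x = 0")
    case False
    then have "norm (M *v ((1 / norm x) *\<^sub>R x)) \<le> norm (M *v v)"
      by (intro max) simp
    then show ?thesis
      using False by (simp add: matrix_vector_mult_scaleR field_simps)
  qed simp
  with v that show ?thesis by simp
qed

lemma maximizer_image_orthogonal:
  fixes f :: "'a::real_inner \<Rightarrow> 'b::real_inner"
  assumes f: "linear f" and v: "norm v = 1"
    and max: "\<And>x. norm (f x) \<le> norm (f v) * norm x" and "v \<bullet> w = 0"
  shows "f v \<bullet> f w = 0"
proof -
  have "- 2 * (f v \<bullet> f w) = 0"
  proof (rule nonneg_quadratic_imp_linear_coeff_zero)
    fix t :: real
    have "(norm (f (v + t *\<^sub>R w)))\<^sup>2 \<le> (norm (f v) * norm (v + t *\<^sub>R w))\<^sup>2"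
      using max by (simp add: power_mono)
    then have "(norm (f v))\<^sup>2 + 2 * t * (f v \<bullet> f w) + t\<^sup>2 * (norm (f w))\<^sup>2
               \<le> (norm (f v))\<^sup>2 * (1 + t\<^sup>2 * (norm w)\<^sup>2)"
      using v \<open>v \<bullet> w = 0\<close>
      by (simp add: linear_add[OF f] linear_scale[OF f] norm_add_scaleR_power2 power_mult_distrib)
    then show "0 \<le> t * (- 2 * (f v \<bullet> f w)) + t\<^sup>2 * ((norm (f v))\<^sup>2 * (norm w)\<^sup>2 - (norm (f w))\<^sup>2)"
      by (simp add: algebra_simps)
  qed
  then show ?thesis by simp
qed

lemma rank_less_if_range_psubset:
  fixes A B :: "real^'n::finite^'m::finite"
  assumes "range ((*v) A) \<subset> range ((*v) B)"
  shows "rank A < rank B"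
proof -
  have "span (range ((*v) C)) = range ((*v) C)" for C :: "real^'n^'m"
    by (metis linear_subspace_image matrix_vector_mul_linear subspace_UNIV span_eq_iff)
  with assms show ?thesis
    by (metis dim_psubset rank_dim_range)
qed

lemma exists_top_singular_pair:
  fixes M :: "real^'t::finite^'n::finite"
  assumes "M \<noteq> 0"
  obtains \<sigma> u v where "\<sigma> > 0" "norm u = 1" "norm v = 1"
    "(M - \<sigma> *\<^sub>R outer u v) *v v = 0" "\<And>x. u \<bullet> ((M - \<sigma> *\<^sub>R outer u v) *v x) = 0"
    "rank (M - \<sigma> *\<^sub>R outer u v) < rank M"
proof -
  obtain v where v: "norm v = 1" and max: "\<And>x. norm (M *v x) \<le> norm (M *v v) * norm x"
    using exists_unit_vector_maximizing_norm_mult[of M] by blast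
  define \<sigma> where "\<sigma> = norm (M *v v)"
  obtain x where "M *v x \<noteq> 0"
    using assms matrix_eq[of M 0] by auto
  then have "0 < norm (M *v x)"
    by simp
  also have "\<dots> \<le> \<sigma> * norm x"
    using max by (simp add: \<sigma>_def)
  finally have "\<sigma> > 0"
    by (simp add: zero_less_mult_iff)
  define u where "u = (1 / \<sigma>) *\<^sub>R (M *v v)"
  define M' where "M' = M - \<sigma> *\<^sub>R outer u v"
  have M': "M' *v x = M *v (x - (v \<bullet> x) *\<^sub>R v)" for x
    using \<open>\<sigma> > 0\<close> by (simp add: M'_def u_def matrix_vector_mult_diff_rdistrib outer_mult_vec
      scaleR_matrix_vector_mult matrix_vector_mult_diff_distrib matrix_vector_mult_scaleR)
  have "v \<bullet> v = 1"
    using v by (simp add: power2_norm_eq_inner[symmetric])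
  have u_orth_M': "u \<bullet> (M' *v x) = 0" for x
    unfolding M' u_def using maximizer_image_orthogonal[OF matrix_vector_mul_linear v max]
    by (simp add: inner_diff_right \<open>v \<bullet> v = 1\<close>)
  have "norm u = 1"
    using \<open>\<sigma> > 0\<close> by (simp add: u_def \<sigma>_def)
  then have "\<sigma> *\<^sub>R u \<notin> range ((*v) M')"
    using u_orth_M' \<open>\<sigma> > 0\<close> by (force simp: norm_eq_sqrt_inner dest: arg_cong[where f = "inner u"])
  moreover have "\<sigma> *\<^sub>R u \<in> range ((*v) M)"
    using \<open>\<sigma> > 0\<close> by (simp add: u_def)
  moreover have "range ((*v) M') \<subseteq> range ((*v) M)"
    using M' by auto
  ultimately have "rank M' < rank M"
    by (intro rank_less_if_range_psubset) blast
  moreover have "M' *v v = 0"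
    using \<open>v \<bullet> v = 1\<close> by (simp add: M')
  ultimately show thesis
    using that \<open>\<sigma> > 0\<close> \<open>norm u = 1\<close> v u_orth_M' unfolding M'_def by blast
qed

lemma compact_svd_exists:
  fixes M :: "real^'t::finite^'n::finite"
  shows "\<exists>r u s v. compact_svd M r u s v"
proof (induction "rank M" arbitrary: M rule: less_induct)
  case less
  show ?case
  proof (cases "M = 0")
    case True
    then have "compact_svd M 0 (\<lambda>_. 0) (\<lambda>_. 0) (\<lambda>_. 0)"
      by (simp add: compact_svd_def)
    then show ?thesis by blast
  next
    case False
    obtain \<sigma> u v where "\<sigma> > 0" "norm u = 1" "norm v = 1"
      and Mv: "(M - \<sigma> *\<^sub>R outer u v) *v v = 0"
      and u_orth: "\<And>x. u \<bullet> ((M - \<sigma> *\<^sub>R outer u v) *v x) = 0"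
      and "rank (M - \<sigma> *\<^sub>R outer u v) < rank M"
      using exists_top_singular_pair[OF False] by blast
    then obtain r u' s' v' where svd': "compact_svd (M - \<sigma> *\<^sub>R outer u v) r u' s' v'"
      using less by blast
    have "u \<bullet> u' l = 0" if "l < r" for l
      using compact_svd_mult_vec(1)[OF svd' that] compact_svdD(3)[OF svd' that] u_orth[of "v' l"]
      by simp
    moreover have "v \<bullet> v' l = 0" if "l < r" for l
      using compact_svd_mult_vec(2)[OF svd' that, of v] compact_svdD(3)[OF svd' that] Mv
      by (simp add: inner_commute)
    ultimately have "compact_svd (M - \<sigma> *\<^sub>R outer u v + \<sigma> *\<^sub>R outer u v) (Suc r)
        (u'(r := u)) (s'(r := \<sigma>)) (v'(r := v))"
      by (intro compact_svd_extend[OF svd'] \<open>\<sigma> > 0\<close> \<open>norm u = 1\<close> \<open>norm v = 1\<close>)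
    then show ?thesis
      by auto
  qed
qed

lemma nuclear_norm_le_sum_outer:
  fixes M :: "real^'t::finite^'n::finite"
  assumes "M = (\<Sum>k<p. outer (x k) (y k))"
  shows "nuclear_norm M \<le> (\<Sum>k<p. norm (x k) * norm (y k))"
proof -
  obtain r u s v where svd: "compact_svd M r u s v"
    using compact_svd_exists by blast
  show ?thesis
    unfolding nuclear_norm_eq_sum[OF svd] by (rule sum_singular_values_le[OF svd assms])
qed

lemma compact_svd_transpose:
  assumes "compact_svd M r u s v"
  shows "compact_svd (transpose M) r v s u"
  using assms by (simp add: compact_svd_iff transpose_sum transpose_scalar transpose_outer)

lemma nuclear_norm_transpose:
  fixes M :: "real^'t::finite^'n::finite"
  shows "nuclear_norm (transpose M) = nuclear_norm M"
proof -
  obtain r u s v where svd: "compact_svd M r u s v"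
    using compact_svd_exists by blast
  show ?thesis
    using nuclear_norm_eq_sum[OF svd] nuclear_norm_eq_sum[OF compact_svd_transpose[OF svd]] by simp
qed

lemma norm_scaleR_add_le:
  fixes v a :: "'a::real_inner"
  assumes s: "s > 0" and v: "norm v = 1"
  shows "norm (s *\<^sub>R v + t *\<^sub>R a) \<le> s + t * (v \<bullet> a) + t\<^sup>2 * (norm a)\<^sup>2 / (2 * s)"
proof -
  define z where "z = s *\<^sub>R v + t *\<^sub>R a"
  have "(norm z)\<^sup>2 = s\<^sup>2 + 2 * t * (s * (v \<bullet> a)) + t\<^sup>2 * (norm a)\<^sup>2"
    unfolding z_def norm_add_scaleR_power2 using s v by simp
  moreover have "2 * s * norm z \<le> (norm z)\<^sup>2 + s\<^sup>2"
    using sum_squares_bound[of s "norm z"] by (simp add: power2_eq_square mult_ac)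
  ultimately have "2 * s * norm z \<le> 2 * s * (s + t * (v \<bullet> a) + t\<^sup>2 * (norm a)\<^sup>2 / (2 * s))"
    using s by (simp add: algebra_simps power2_eq_square)
  then show ?thesis
    using s by (simp add: z_def)
qed

lemma nuclear_norm_add_outer_left_le:
  fixes M :: "real^'t::finite^'n::finite"
  assumes svd: "compact_svd M r u s v" and l: "l < r"
  shows "nuclear_norm (M + t *\<^sub>R outer (u l) a)
         \<le> nuclear_norm M + t * (v l \<bullet> a) + t\<^sup>2 * ((norm a)\<^sup>2 / (2 * s l))"
proof -
  note svd' = compact_svdD[OF svd]
  define y where "y k = s k *\<^sub>R v k + (if k = l then t *\<^sub>R a else 0)" for k
  have "M + t *\<^sub>R outer (u l) a = (\<Sum>k<r. outer (u k) (y k))"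
    using l by (simp add: svd'(4) y_def outer_add_right outer_scaleR_right sum.distrib
      if_distrib[of "outer _"] cong: if_cong)
  then have "nuclear_norm (M + t *\<^sub>R outer (u l) a) \<le> (\<Sum>k<r. norm (u k) * norm (y k))"
    by (rule nuclear_norm_le_sum_outer)
  also have "\<dots> \<le> (\<Sum>k<r. s k + (if k = l then t * (v l \<bullet> a) + t\<^sup>2 * (norm a)\<^sup>2 / (2 * s l) else 0))"
    using svd'(3) norm_scaleR_add_le[OF svd'(3)[OF l] orthonormal_upto_norm[OF svd'(2) l]]
      orthonormal_upto_norm[OF svd'(1)] orthonormal_upto_norm[OF svd'(2)]
    by (intro sum_mono) (simp add: y_def less_imp_le add.assoc)
  also have "\<dots> = nuclear_norm M + t * (v l \<bullet> a) + t\<^sup>2 * ((norm a)\<^sup>2 / (2 * s l))"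
    using l by (simp add: nuclear_norm_eq_sum[OF svd] sum.distrib)
  finally show ?thesis .
qed

lemma nuclear_norm_add_outer_right_le:
  fixes M :: "real^'t::finite^'n::finite"
  assumes svd: "compact_svd M r u s v" and l: "l < r"
  shows "nuclear_norm (M + t *\<^sub>R outer b (v l))
         \<le> nuclear_norm M + t * (u l \<bullet> b) + t\<^sup>2 * ((norm b)\<^sup>2 / (2 * s l))"
  using nuclear_norm_add_outer_left_le[OF compact_svd_transpose[OF svd] l, of t b]
  by (simp add: transpose_add transpose_scalar transpose_outer nuclear_norm_transpose
    flip: nuclear_norm_transpose[of "M + t *\<^sub>R outer b (v l)"])

section \<open>Orthogonal projections\<close>

lemma subspace_orth_compl: "subspace (orth_compl S)"
  by (auto simp: subspace_def orth_compl_def inner_add_left)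

lemma orth_proj_eqI:
  fixes A :: "'a::real_inner set"
  assumes A: "subspace A" and "p \<in> A" and "\<And>y. y \<in> A \<Longrightarrow> (x - p) \<bullet> y = 0"
  shows "orth_proj A x = p"
  unfolding orth_proj_def
proof (rule the_equality)
  show "p \<in> A \<and> (\<forall>y\<in>A. (x - p) \<bullet> y = 0)"
    using assms by blast
next
  fix q assume q: "q \<in> A \<and> (\<forall>y\<in>A. (x - q) \<bullet> y = 0)"
  then have "p - q \<in> A"
    using A \<open>p \<in> A\<close> by (simp add: subspace_diff)
  then have "(p - q) \<bullet> (p - q) = 0"
    using q assms(3) by (metis diff_diff_eq2 diff_self inner_diff_left diff_add_cancel)
  then show "q = p" by simp
qed

lemma orth_proj_in_orthogonal:
  fixes A :: "'a::euclidean_space set"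
  assumes A: "subspace A"
  shows "orth_proj A x \<in> A" and "\<And>y. y \<in> A \<Longrightarrow> (x - orth_proj A x) \<bullet> y = 0"
proof -
  obtain p z where p: "p \<in> span A" and z: "\<And>w. w \<in> span A \<Longrightarrow> orthogonal z w" and "x = p + z"
    using orthogonal_subspace_decomp_exists[of A x] by blast
  moreover have "span A = A"
    using A by (simp add: span_eq_iff)
  ultimately have "orth_proj A x = p"
    using A by (intro orth_proj_eqI) (auto simp: orthogonal_def)
  then show "orth_proj A x \<in> A" and "\<And>y. y \<in> A \<Longrightarrow> (x - orth_proj A x) \<bullet> y = 0"
    using p z \<open>x = p + z\<close> \<open>span A = A\<close> by (auto simp: orthogonal_def)
qed

lemma linear_orth_proj:
  fixes A :: "'a::euclidean_space set"
  assumes A: "subspace A"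
  shows "linear (orth_proj A)"
proof (rule linearI)
  note P = orth_proj_in_orthogonal[OF A]
  fix x y :: 'a and c :: real
  show "orth_proj A (x + y) = orth_proj A x + orth_proj A y"
  proof (rule orth_proj_eqI[OF A])
    show "orth_proj A x + orth_proj A y \<in> A"
      by (intro subspace_add A P(1))
    fix z assume "z \<in> A"
    have "(x + y - (orth_proj A x + orth_proj A y)) \<bullet> z
          = (x - orth_proj A x) \<bullet> z + (y - orth_proj A y) \<bullet> z"
      by (simp add: inner_diff_left inner_add_left)
    then show "(x + y - (orth_proj A x + orth_proj A y)) \<bullet> z = 0"
      using P(2)[OF \<open>z \<in> A\<close>] by simp
  qed
  show "orth_proj A (c *\<^sub>R x) = c *\<^sub>R orth_proj A x"
  proof (rule orth_proj_eqI[OF A])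
    show "c *\<^sub>R orth_proj A x \<in> A"
      by (intro subspace_scale A P(1))
    fix z assume "z \<in> A"
    have "(c *\<^sub>R x - c *\<^sub>R orth_proj A x) \<bullet> z = c * ((x - orth_proj A x) \<bullet> z)"
      by (simp add: inner_diff_left right_diff_distrib)
    then show "(c *\<^sub>R x - c *\<^sub>R orth_proj A x) \<bullet> z = 0"
      using P(2)[OF \<open>z \<in> A\<close>] by simp
  qed
qed

lemma orth_proj_orth_compl_eq_0:
  fixes S :: "'a::real_inner set"
  assumes "x \<in> S"
  shows "orth_proj (orth_compl S) x = 0"
  using assms by (intro orth_proj_eqI subspace_orth_compl subspace_0)
    (auto simp: orth_compl_def inner_commute)

lemma orth_proj_eq_self:
  fixes A :: "'a::real_inner set"
  assumes "subspace A" "x \<in> A"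
  shows "orth_proj A x = x"
  using assms by (intro orth_proj_eqI) auto

lemma inner_orth_proj_orth_proj:
  fixes A :: "'a::euclidean_space set"
  assumes "subspace A"
  shows "orth_proj A x \<bullet> orth_proj A y = x \<bullet> orth_proj A y"
proof -
  have "(x - orth_proj A x) \<bullet> orth_proj A y = 0"
    using orth_proj_in_orthogonal[OF assms] by blast
  then show ?thesis
    by (simp add: inner_diff_left)
qed

section \<open>First-order conditions at the minimizer\<close>

locale nuclear_norm_regression_minimizer =
  fixes Obs :: "real^'t::finite^'n::finite" and Z :: "'k::finite \<Rightarrow> real^'t^'n" and lam :: real
    and Mhat :: "real^'t^'n" and mhat :: "real^'n" and tauhat :: "real^'k"
    and r :: nat and U :: "nat \<Rightarrow> real^'n" and S :: "nat \<Rightarrow> real" and V :: "nat \<Rightarrow> real^'t"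
  assumes lam_pos: "lam > 0"
    and minimizer: "\<forall>M m \<tau>. objective Obs Z lam Mhat mhat tauhat \<le> objective Obs Z lam M m \<tau>"
    and svd: "compact_svd Mhat r U S V"
begin

definition residual :: "real^'t^'n" where
  "residual = Obs - Mhat - outer mhat ones - (\<Sum>i\<in>UNIV. tauhat $ i *\<^sub>R Z i)"

lemma residual_inner_first_order:
  assumes nuclear_norm_bound: "\<And>t. nuclear_norm (Mhat + t *\<^sub>R H) \<le> nuclear_norm Mhat + t * c + t\<^sup>2 * K"
  shows "residual \<bullet> (H + outer w ones + (\<Sum>i\<in>UNIV. \<delta> $ i *\<^sub>R Z i)) = lam * c"
proof -
  define G where "G = H + outer w ones + (\<Sum>i\<in>UNIV. \<delta> $ i *\<^sub>R Z i)"
  have "lam * c - residual \<bullet> G = 0"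
  proof (rule nonneg_quadratic_imp_linear_coeff_zero)
    fix t :: real
    have shifted: "Obs - (Mhat + t *\<^sub>R H) - outer (mhat + t *\<^sub>R w) ones
            - (\<Sum>i\<in>UNIV. (tauhat + t *\<^sub>R \<delta>) $ i *\<^sub>R Z i) = residual - t *\<^sub>R G"
      by (simp add: residual_def G_def outer_add_left outer_scaleR_left scaleR_add_left sum.distrib
          scaleR_sum_right algebra_simps sum_negf)
    have "objective Obs Z lam Mhat mhat tauhat
          \<le> objective Obs Z lam (Mhat + t *\<^sub>R H) (mhat + t *\<^sub>R w) (tauhat + t *\<^sub>R \<delta>)"
      using minimizer by blast
    then have "(1/2) * (norm residual)\<^sup>2 + lam * nuclear_norm Mhat
        \<le> (1/2) * (norm (residual - t *\<^sub>R G))\<^sup>2 + lam * nuclear_norm (Mhat + t *\<^sub>R H)"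
      unfolding objective_def shifted by (simp add: residual_def)
    also have "\<dots> \<le> (1/2) * (norm (residual - t *\<^sub>R G))\<^sup>2 + lam * (nuclear_norm Mhat + t * c + t\<^sup>2 * K)"
      using nuclear_norm_bound[of t] lam_pos by simp
    finally have "(1/2) * (norm residual)\<^sup>2
        \<le> (1/2) * (norm (residual - t *\<^sub>R G))\<^sup>2 + lam * (t * c + t\<^sup>2 * K)"
      by (simp add: algebra_simps)
    moreover have "(norm (residual - t *\<^sub>R G))\<^sup>2
        = (norm residual)\<^sup>2 - 2 * t * (residual \<bullet> G) + t\<^sup>2 * (norm G)\<^sup>2"
      using norm_add_scaleR_power2[of residual "- t" G] by simp
    ultimately show "0 \<le> t * (lam * c - residual \<bullet> G) + t\<^sup>2 * ((norm G)\<^sup>2 / 2 + lam * K)"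
      by (simp add: algebra_simps)
  qed
  then show ?thesis
    by (simp add: G_def)
qed

lemma residual_inner_Z: "residual \<bullet> Z i = 0"
proof -
  have "(\<Sum>j\<in>UNIV. axis i (1::real) $ j *\<^sub>R Z j) = Z i"
    by (simp add: axis_def if_distrib[of "\<lambda>x. x *\<^sub>R _"] cong: if_cong)
  then show ?thesis
    using residual_inner_first_order[of 0 0 0 0 "axis i 1"] by simp
qed

lemma residual_inner_outer_ones: "residual \<bullet> outer w ones = 0"
  using residual_inner_first_order[of 0 0 0 w 0] by simp

lemma residual_inner_outer_left:
  assumes "l < r"
  shows "residual \<bullet> outer (U l) a = lam * (V l \<bullet> a)"
  using residual_inner_first_order[OF nuclear_norm_add_outer_left_le[OF svd assms], where w = 0 and \<delta> = 0] by simp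

lemma residual_inner_outer_right:
  assumes "l < r"
  shows "residual \<bullet> outer b (V l) = lam * (U l \<bullet> b)"
  using residual_inner_first_order[OF nuclear_norm_add_outer_right_le[OF svd assms], where w = 0 and \<delta> = 0] by simp

lemma right_singular_vector_orthogonal_ones:
  assumes "l < r"
  shows "V l \<bullet> ones = 0"
  using residual_inner_outer_left[OF assms, of ones] residual_inner_outer_ones lam_pos by simp

lemma residual_minus_scaled_sum_outer_mem_orth_compl:
  "residual - lam *\<^sub>R (\<Sum>l<r. outer (U l) (V l)) \<in> orth_compl (tangent_T r U V)"
  unfolding orth_compl_def
proof (clarify)
  note svd' = compact_svdD[OF svd]
  fix x assume "x \<in> tangent_T r U V"
  then obtain a b w where x: "x = (\<Sum>l<r. outer (U l) (a l)) + (\<Sum>l<r. outer (b l) (V l)) + outer w ones"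
    unfolding tangent_T_def by blast
  have "(\<Sum>l<r. outer (U l) (V l)) \<bullet> outer w ones = 0"
    by (simp add: inner_sum_left inner_outer right_singular_vector_orthogonal_ones)
  then show "(residual - lam *\<^sub>R (\<Sum>l<r. outer (U l) (V l))) \<bullet> x = 0"
    by (simp add: x inner_diff_left inner_add_right inner_sum_right residual_inner_outer_left
      residual_inner_outer_right residual_inner_outer_ones inner_sum_outer_outer_left[OF svd'(1)]
      inner_sum_outer_outer_right[OF svd'(2)])
qed

lemma sum_outer_singular_vectors_mem_tangent_T: "(\<Sum>l<r. outer (U l) (V l)) \<in> tangent_T r U V"
  unfolding tangent_T_def by (rule CollectI, intro exI[of _ V] exI[of _ "\<lambda>_. 0"] exI[of _ 0]) simp

lemma fit_mem_tangent_T: "Mhat + outer mhat ones \<in> tangent_T r U V"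
  unfolding tangent_T_def
  by (rule CollectI, intro exI[of _ "\<lambda>l. S l *\<^sub>R V l"] exI[of _ "\<lambda>_. 0"] exI[of _ mhat])
    (simp add: compact_svdD(4)[OF svd] outer_scaleR_right)

lemma orth_proj_residual:
  "orth_proj (orth_compl (tangent_T r U V)) residual = residual - lam *\<^sub>R (\<Sum>l<r. outer (U l) (V l))"
proof -
  let ?P = "orth_proj (orth_compl (tangent_T r U V))"
  let ?W = "\<Sum>l<r. outer (U l) (V l)"
  have "?P residual = ?P (residual - lam *\<^sub>R ?W) + lam *\<^sub>R ?P ?W"
    using linear_orth_proj[OF subspace_orth_compl[of "tangent_T r U V"]]
    by (simp add: linear_diff linear_scale)
  also have "\<dots> = residual - lam *\<^sub>R ?W"
    using orth_proj_eq_self[OF subspace_orth_compl residual_minus_scaled_sum_outer_mem_orth_compl]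
      orth_proj_orth_compl_eq_0[OF sum_outer_singular_vectors_mem_tangent_T] by simp
  finally show ?thesis .
qed

end

theorem lemma1:
  fixes Obs Mstar Ehat Mhat :: "real^'t::finite^'n::finite"
    and Z :: "'k::finite \<Rightarrow> real^'t^'n"
    and taustar tauhat :: "real^'k"
    and mhat :: "real^'n"
    and lam :: real
    and r :: nat and U :: "nat \<Rightarrow> real^'n" and S :: "nat \<Rightarrow> real" and V :: "nat \<Rightarrow> real^'t"
  assumes model: "Obs = Mstar + (\<Sum>i\<in>UNIV. taustar $ i *\<^sub>R Z i) + Ehat"
    and lam: "lam > 0"
    and minimizer: "\<forall>M m \<tau>. objective Obs Z lam Mhat mhat tauhat \<le> objective Obs Z lam M m \<tau>"
    and svd: "compact_svd Mhat r U S V"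
  shows "(\<chi> i j. orth_proj (orth_compl (tangent_T r U V)) (Z i)
                  \<bullet> orth_proj (orth_compl (tangent_T r U V)) (Z j)) *v (tauhat - taustar)
         = (\<chi> i. lam * (Z i \<bullet> (\<Sum>l<r. outer (U l) (V l))))
         + (\<chi> i. Z i \<bullet> orth_proj (orth_compl (tangent_T r U V)) Ehat)
         + (\<chi> i. Z i \<bullet> orth_proj (orth_compl (tangent_T r U V)) Mstar)"
proof -
  interpret nuclear_norm_regression_minimizer Obs Z lam Mhat mhat tauhat r U S V
    using lam minimizer svd by unfold_locales
  define P where "P = orth_proj (orth_compl (tangent_T r U V))"
  define W where "W = (\<Sum>l<r. outer (U l) (V l))"
  define c where "c = tauhat - taustar"
  have P: "linear P"
    unfolding P_def by (rule linear_orth_proj[OF subspace_orth_compl])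
  have "(\<Sum>j\<in>UNIV. c $ j *\<^sub>R P (Z j)) = P (\<Sum>j\<in>UNIV. c $ j *\<^sub>R Z j)"
    using P by (simp add: linear_sum linear_scale)
  also have "\<dots> = P (Mstar + Ehat - (Mhat + outer mhat ones) - residual)"
    unfolding residual_def by (simp add: model c_def scaleR_left_diff_distrib sum_subtractf)
  also have "\<dots> = P Mstar + P Ehat - P (Mhat + outer mhat ones) - P residual"
    using P by (simp add: linear_add linear_diff)
  also have "\<dots> = P Mstar + P Ehat - (residual - lam *\<^sub>R W)"
    unfolding P_def W_def orth_proj_residual orth_proj_orth_compl_eq_0[OF fit_mem_tangent_T] by simp
  finally have "Z i \<bullet> (\<Sum>j\<in>UNIV. c $ j *\<^sub>R P (Z j)) = lam * (Z i \<bullet> W) + Z i \<bullet> P Ehat + Z i \<bullet> P Mstar" for i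
    using residual_inner_Z[of i] by (simp add: inner_diff_right inner_add_right inner_commute)
  then show ?thesis
    by (simp add: vec_eq_iff matrix_vector_mult_def P_def W_def c_def inner_sum_right mult.commute
      inner_orth_proj_orth_proj[OF subspace_orth_compl])
qed

end
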